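(* Suppose that the bivariate copula $A$ allows a continuous Markov kernel $K_A$. Then $$\lim_{N\to\infty}\sup_{(x,y)\in[0,1]^2}\left|K_{\mathcal{CB}_N(A)}(x,[0,y])-K_A(x,[0,y])\right|=0,$$ i.e. $(\mathcal{CB}_N(A))_{N\in\mathbb{N}}$ converges uniformly conditional to $A$.
   Context: A (bivariate) copula is a distribution function on $[0,1]^2$ with uniform marginals; each copula $B$ corresponds to a doubly stochastic measure $\mu_B$ with $B(x,y)=\mu_B([0,x]\times[0,y])$. A Markov kernel of $B$ is a map $K_B:[0,1]\times\mathcal{B}([0,1])\to[0,1]$, measurable in the first argument, a probability measure in the second, with $\int_{E_1}K_B(x,E_2)\,d\lambda(x)=\mu_B(E_1\times E_2)$ for all Borel $E_1,E_2$ ($\lambda$ = Lebesgue measure). $A$ allows a continuous Markov kernel if it has a version $K_A$ with $(x,y)\mapsto K_A(x,[0,y])$ continuous on $[0,1]^2$; $K_A$ denotes this version. Checkerboard approximation: $I_1^N=[0,\tfrac1N]$, $I_i^N=(\tfrac{i-1}N,\tfrac iN]$ ($i=2,\dots,N$), $Q_{i,j}^N=I_i^N\times I_j^N$; $\mathcal{CB}_N(A)$ is the absolutely continuous copula with density $N^2\sum_{i,j=1}^N\mu_A(Q^N_{i,j})\mathbf 1_{Q^N_{i,j}}$, with Markov kernel version $K_{\mathcal{CB}_N(A)}(x,[0,y])=N^2\sum_{i,j=1}^N\mu_A(Q^N_{i,j})\mathbf 1_{I^N_i}(x)\,\lambda([0,y]\cap I^N_j)$. *)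

theory Defs
  imports "HOL-Probability.Probability"
begin

definition copula :: "(real \<Rightarrow> real \<Rightarrow> real) \<Rightarrow> bool" where
  "copula C \<longleftrightarrow>
     (\<forall>x\<in>{0..1}. C x 0 = 0 \<and> C 0 x = 0 \<and> C x 1 = x \<and> C 1 x = x) \<and>
     (\<forall>x1\<in>{0..1}. \<forall>x2\<in>{0..1}. \<forall>y1\<in>{0..1}. \<forall>y2\<in>{0..1}.
        x1 \<le> x2 \<longrightarrow> y1 \<le> y2 \<longrightarrow> C x2 y2 - C x1 y2 - C x2 y1 + C x1 y1 \<ge> 0)"

definition doubly_stochastic :: "(real \<times> real) measure \<Rightarrow> bool" where
  "doubly_stochastic \<mu> \<longleftrightarrow>
     sets \<mu> = sets (borel :: (real \<times> real) measure) \<and>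
     emeasure \<mu> (UNIV - {0..1} \<times> {0..1}) = 0 \<and>
     (\<forall>E\<in>sets borel. emeasure \<mu> (E \<times> UNIV) = emeasure lborel (E \<inter> {0..1})) \<and>
     (\<forall>E\<in>sets borel. emeasure \<mu> (UNIV \<times> E) = emeasure lborel (E \<inter> {0..1}))"

definition copula_measure :: "(real \<Rightarrow> real \<Rightarrow> real) \<Rightarrow> (real \<times> real) measure \<Rightarrow> bool" where
  "copula_measure C \<mu> \<longleftrightarrow> doubly_stochastic \<mu> \<and>
     (\<forall>x\<in>{0..1}. \<forall>y\<in>{0..1}. C x y = measure \<mu> ({0..x} \<times> {0..y}))"

definition markov_kernel :: "(real \<times> real) measure \<Rightarrow> (real \<Rightarrow> real measure) \<Rightarrow> bool" where
  "markov_kernel \<mu> K \<longleftrightarrow>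
     (\<forall>x\<in>{0..1}. prob_space (K x) \<and> sets (K x) = sets (borel :: real measure)
                 \<and> emeasure (K x) {0..1} = 1) \<and>
     (\<forall>E\<in>sets borel. (\<lambda>x. emeasure (K x) E) \<in> borel_measurable (restrict_space borel {0..1})) \<and>
     (\<forall>E1\<in>sets borel. \<forall>E2\<in>sets borel. E1 \<subseteq> {0..1} \<longrightarrow> E2 \<subseteq> {0..1} \<longrightarrow>
        (\<integral>\<^sup>+ x. emeasure (K x) E2 * indicator E1 x \<partial>lborel) = emeasure \<mu> (E1 \<times> E2))"

definition cb_I :: "nat \<Rightarrow> nat \<Rightarrow> real set" where
  "cb_I N i = (if i = 1 then {0..1 / real N} else {(real i - 1) / real N <.. real i / real N})"

definition cb_Q :: "nat \<Rightarrow> nat \<Rightarrow> nat \<Rightarrow> (real \<times> real) set" where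
  "cb_Q N i j = cb_I N i \<times> cb_I N j"

definition cb_kernel :: "(real \<times> real) measure \<Rightarrow> nat \<Rightarrow> real \<Rightarrow> real \<Rightarrow> real" where
  "cb_kernel \<mu> N x y = (real N)^2 * (\<Sum>i\<in>{1..N}. \<Sum>j\<in>{1..N}.
       measure \<mu> (cb_Q N i j) * indicator (cb_I N i) x * measure lborel ({0..y} \<inter> cb_I N j))"

end

theory Submission
  imports Defs
begin

text \<open>Let x lie in the checkerboard cell I_i and put k = floor (N y). In y the checkerboard
  kernel interpolates linearly between grid points, so K_{CB_N(A)}(x,[0,y]) lies between
  N \<mu>(I_i \<times> [0,k/N]) and N \<mu>(I_i \<times> [0,(k+1)/N]). By the disintegration identity,
  N \<mu>(I_i \<times> [0,z]) is the mean of t \<mapsto> K_A(t,[0,z]) over I_i. Hence the error at (x,y) is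
  bounded by the oscillation of (t,z) \<mapsto> K_A(t,[0,z]) over points within 1/N of (x,y) in each
  coordinate, and this tends to 0 uniformly because the map is uniformly continuous on the
  compact unit square.\<close>

lemma doubly_stochastic_sets: "doubly_stochastic \<mu> \<Longrightarrow> sets \<mu> = sets borel"
  unfolding doubly_stochastic_def by blast

lemma doubly_stochastic_Times_sets:
  "doubly_stochastic \<mu> \<Longrightarrow> A \<in> sets borel \<Longrightarrow> B \<in> sets borel \<Longrightarrow> A \<times> B \<in> sets \<mu>"
  unfolding doubly_stochastic_sets borel_prod[symmetric] by simp

lemma doubly_stochastic_finite_measure:
  assumes "doubly_stochastic \<mu>"
  shows "finite_measure \<mu>"
proof -
  have "space \<mu> = UNIV"
    using sets_eq_imp_space_eq[OF doubly_stochastic_sets[OF assms]] by simp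
  moreover have "emeasure \<mu> (UNIV \<times> UNIV) = emeasure lborel (UNIV \<inter> {0..1::real})"
    using assms unfolding doubly_stochastic_def by (metis sets.top space_borel)
  ultimately show ?thesis
    by (intro finite_measureI) simp
qed

lemma doubly_stochastic_Times_singleton:
  assumes "doubly_stochastic \<mu>"
  shows "measure \<mu> (E \<times> {c}) = 0"
proof -
  have "\<forall>F\<in>sets borel. emeasure \<mu> (UNIV \<times> F) = emeasure lborel (F \<inter> {0..1})"
    using assms unfolding doubly_stochastic_def by (elim conjE)
  moreover have "{c} \<in> sets borel"
    by simp
  ultimately have "emeasure \<mu> (UNIV \<times> {c}) = emeasure lborel ({c} \<inter> {0..1})"
    by blast
  also have "\<dots> = 0"
    by (intro emeasure_lborel_countable) simp
  finally have null: "emeasure \<mu> (UNIV \<times> {c}) = 0" .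
  have "UNIV \<times> {c} \<in> sets \<mu>"
    using assms by (simp add: doubly_stochastic_Times_sets)
  then have "emeasure \<mu> (E \<times> {c}) = 0"
    using null by (rule emeasure_eq_0) auto
  then show ?thesis
    by (simp add: measure_def)
qed

lemma markov_kernel_emeasure_eq_measure:
  assumes "markov_kernel \<mu> K" "x \<in> {0..1}"
  shows "emeasure (K x) E = ennreal (measure (K x) E)"
proof -
  have "\<forall>x\<in>{0..1}. prob_space (K x) \<and> sets (K x) = sets borel \<and> emeasure (K x) {0..1} = 1"
    using assms(1) unfolding markov_kernel_def by (elim conjE)
  then have "prob_space (K x)"
    using assms(2) by blast
  then show ?thesis
    by (metis prob_space_def finite_measure.emeasure_eq_measure)
qed

lemma markov_kernel_nn_integral_eq:
  assumes mk: "markov_kernel \<mu> K"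
    and E1: "E1 \<in> sets borel" "E1 \<subseteq> {0..1}" and E2: "E2 \<in> sets borel" "E2 \<subseteq> {0..1}"
  shows "(\<integral>\<^sup>+ x. ennreal (measure (K x) E2) * indicator E1 x \<partial>lborel) = emeasure \<mu> (E1 \<times> E2)"
proof -
  have "\<forall>E1\<in>sets borel. \<forall>E2\<in>sets borel. E1 \<subseteq> {0..1} \<longrightarrow> E2 \<subseteq> {0..1} \<longrightarrow>
      (\<integral>\<^sup>+ x. emeasure (K x) E2 * indicator E1 x \<partial>lborel) = emeasure \<mu> (E1 \<times> E2)"
    using mk unfolding markov_kernel_def by (elim conjE)
  then have "(\<integral>\<^sup>+ x. emeasure (K x) E2 * indicator E1 x \<partial>lborel) = emeasure \<mu> (E1 \<times> E2)"
    using E1 E2 by blast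
  moreover have "emeasure (K x) E2 * indicator E1 x = ennreal (measure (K x) E2) * indicator E1 x" for x
    using E1(2) markov_kernel_emeasure_eq_measure[OF mk] by (cases "x \<in> E1") auto
  ultimately show ?thesis
    by simp
qed

lemma markov_kernel_measure_Times_bounds:
  assumes mk: "markov_kernel \<mu> K" and ds: "doubly_stochastic \<mu>"
    and E1: "E1 \<in> sets borel" "E1 \<subseteq> {0..1}" and E2: "E2 \<in> sets borel" "E2 \<subseteq> {0..1}"
    and bounds: "\<And>t. t \<in> E1 \<Longrightarrow> a \<le> measure (K t) E2 \<and> measure (K t) E2 \<le> b"
  shows "measure lborel E1 * a \<le> measure \<mu> (E1 \<times> E2)"
    and "measure \<mu> (E1 \<times> E2) \<le> measure lborel E1 * b"
proof -
  let ?I = "\<lambda>c. \<integral>\<^sup>+ x. ennreal c * indicator E1 x \<partial>lborel"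
  have \<mu>_fin: "emeasure \<mu> (E1 \<times> E2) = ennreal (measure \<mu> (E1 \<times> E2))"
    using doubly_stochastic_finite_measure[OF ds] by (rule finite_measure.emeasure_eq_measure)
  have "emeasure lborel E1 \<le> emeasure lborel {0..1::real}"
    using E1 by (intro emeasure_mono) auto
  then have "emeasure lborel E1 = ennreal (measure lborel E1)"
    by (intro emeasure_eq_ennreal_measure) (auto simp: top_unique)
  then have I_eq: "?I c = ennreal (measure lborel E1 * c)" if "0 \<le> c" for c
    using E1 that by (simp add: nn_integral_cmult_indicator ennreal_mult mult.commute)
  have integral_eq: "(\<integral>\<^sup>+ x. ennreal (measure (K x) E2) * indicator E1 x \<partial>lborel) = emeasure \<mu> (E1 \<times> E2)"
    by (rule markov_kernel_nn_integral_eq[OF mk E1 E2])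
  show "measure lborel E1 * a \<le> measure \<mu> (E1 \<times> E2)"
  proof (cases "a \<le> 0")
    case True
    then show ?thesis
      by (simp add: mult_nonneg_nonpos order_trans[OF _ measure_nonneg])
  next
    case False
    have "?I a \<le> emeasure \<mu> (E1 \<times> E2)"
      unfolding integral_eq[symmetric]
      by (intro nn_integral_mono) (auto simp: indicator_def intro!: ennreal_leI dest: bounds)
    then show ?thesis
      using False by (simp add: I_eq \<mu>_fin ennreal_le_iff)
  qed
  show "measure \<mu> (E1 \<times> E2) \<le> measure lborel E1 * b"
  proof (cases "E1 = {}")
    case True
    then show ?thesis
      by simp
  next
    case False
    then have "0 \<le> b"
      using bounds measure_nonneg by (metis ex_in_conv order_trans)
    have "emeasure \<mu> (E1 \<times> E2) \<le> ?I b"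
      unfolding integral_eq[symmetric]
      by (intro nn_integral_mono) (auto simp: indicator_def intro!: ennreal_leI dest: bounds)
    then show ?thesis
      using \<open>0 \<le> b\<close> by (simp add: I_eq \<mu>_fin)
  qed
qed

lemma cb_I_bounds: "t \<in> cb_I N i \<Longrightarrow> (real i - 1) / real N \<le> t \<and> t \<le> real i / real N"
  by (auto simp: cb_I_def split: if_splits)

lemma cb_I_subset:
  assumes "1 \<le> i" "i \<le> N"
  shows "cb_I N i \<subseteq> {0..1}"
proof
  fix t
  assume "t \<in> cb_I N i"
  moreover have "0 \<le> (real i - 1) / real N" "real i / real N \<le> 1"
    using assms by simp_all
  ultimately show "t \<in> {0..1}"
    using cb_I_bounds[of t N i] by auto
qed

lemma sets_cb_I [measurable]: "cb_I N i \<in> sets borel"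
  by (simp add: cb_I_def)

lemma emeasure_cb_I: "1 \<le> i \<Longrightarrow> emeasure lborel (cb_I N i) = ennreal (1 / real N)"
  by (auto simp: cb_I_def diff_divide_distrib)

lemma cb_I_dist_le: "t \<in> cb_I N i \<Longrightarrow> x \<in> cb_I N i \<Longrightarrow> \<bar>t - x\<bar> \<le> 1 / real N"
  using cb_I_bounds[of t N i] cb_I_bounds[of x N i] by (simp add: diff_divide_distrib abs_le_iff)

lemma cb_I_unique:
  assumes "x \<in> cb_I N i" "x \<in> cb_I N i'" "1 \<le> i" "1 \<le> i'"
  shows "i = i'"
proof -
  have False if "x \<in> cb_I N p" "x \<in> cb_I N q" "1 \<le> p" "p < q" for p q
  proof -
    have "real p / real N \<le> (real q - 1) / real N"
      using that(4) by (intro divide_right_mono) auto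
    moreover have "(real q - 1) / real N < x"
      using that by (auto simp: cb_I_def split: if_splits)
    ultimately show False
      using cb_I_bounds[OF that(1)] by linarith
  qed
  then show ?thesis
    using assms by (cases i i' rule: linorder_cases) auto
qed

lemma cb_I_cover:
  assumes x: "x \<in> {0..1}" and N: "0 < N"
  obtains i where "i \<in> {1..N}" "x \<in> cb_I N i"
proof (cases "x = 0")
  case True
  then show ?thesis
    using N that[of 1] by (simp add: cb_I_def)
next
  case False
  define i where "i = nat \<lceil>real N * x\<rceil>"
  have Nx_pos: "0 < real N * x"
    using False x N by simp
  then have i_eq: "real i = of_int \<lceil>real N * x\<rceil>"
    unfolding i_def by simp
  have i_bounds: "real i - 1 < real N * x" "real N * x \<le> real i"
    using i_eq ceiling_correct[of "real N * x"] by linarith+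
  have "real N * x \<le> real N"
    using x by (simp add: mult_left_le)
  then have "i \<le> N"
    unfolding i_def by (simp add: nat_le_iff ceiling_le_iff)
  moreover have "1 \<le> i"
    using i_bounds(2) Nx_pos by simp
  moreover have "(real i - 1) / real N < x" "x \<le> real i / real N"
    using i_bounds N by (simp_all add: field_simps)
  then have "x \<in> cb_I N i"
    using x by (auto simp: cb_I_def)
  ultimately show ?thesis
    using that by simp
qed

lemma measure_cb_I: "1 \<le> j \<Longrightarrow> measure lborel (cb_I N j) = 1 / real N"
  by (simp add: measure_def emeasure_cb_I)

lemma measure_Icc_Int_cb_I_le:
  assumes "1 \<le> j"
  shows "measure lborel ({0..y} \<inter> cb_I N j) \<le> 1 / real N"
proof -
  have "cb_I N j \<in> fmeasurable lborel"
    using assms by (intro fmeasurableI) (simp_all add: emeasure_cb_I)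
  then have "measure lborel ({0..y} \<inter> cb_I N j) \<le> measure lborel (cb_I N j)"
    by (intro measure_mono_fmeasurable) auto
  then show ?thesis
    using assms by (simp add: measure_cb_I)
qed

lemma measure_Icc_Int_cb_I_full:
  assumes "1 \<le> j" "real j / real N \<le> y"
  shows "measure lborel ({0..y} \<inter> cb_I N j) = 1 / real N"
proof -
  have "0 \<le> (real j - 1) / real N"
    using assms(1) by simp
  then have "cb_I N j \<subseteq> {0..y}"
    using assms(2) cb_I_bounds[of _ N j] by fastforce
  then show ?thesis
    using assms(1) by (simp add: Int_absorb1 measure_cb_I)
qed

lemma measure_Icc_Int_cb_I_empty:
  assumes "y < (real j - 1) / real N"
  shows "measure lborel ({0..y} \<inter> cb_I N j) = 0"
proof -
  have "{0..y} \<inter> cb_I N j = {}"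
    using assms cb_I_bounds[of _ N j] by fastforce
  then show ?thesis
    by simp
qed

lemma sum_increments_truncated:
  fixes M :: "nat \<Rightarrow> real"
  shows "(\<Sum>j\<in>{1..N}. if j \<le> k then M j - M (j - 1) else 0) = M (min k N) - M 0"
proof (induction N)
  case 0
  then show ?case
    by simp
next
  case (Suc N)
  then show ?case
    by (cases "k \<le> N") (auto simp: min_def le_Suc_eq)
qed

lemma sum_weighted_increments_bounds:
  fixes M w :: "nat \<Rightarrow> real"
  assumes M: "mono M" and w: "\<And>j. 1 \<le> j \<Longrightarrow> 0 \<le> w j \<and> w j \<le> 1"
    and w_one: "\<And>j. 1 \<le> j \<Longrightarrow> j \<le> k \<Longrightarrow> w j = 1"
    and w_zero: "\<And>j. k + 2 \<le> j \<Longrightarrow> w j = 0"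
    and k: "k \<le> N"
  shows "M k - M 0 \<le> (\<Sum>j\<in>{1..N}. (M j - M (j - 1)) * w j)"
    and "(\<Sum>j\<in>{1..N}. (M j - M (j - 1)) * w j) \<le> M (min (k + 1) N) - M 0"
proof -
  have incr: "0 \<le> M j - M (j - 1)" for j
    using M by (simp add: mono_def)
  have "M k - M 0 = (\<Sum>j\<in>{1..N}. if j \<le> k then M j - M (j - 1) else 0)"
    using k sum_increments_truncated[where M=M and N=N and k=k] by (simp add: min_absorb1)
  also have "\<dots> \<le> (\<Sum>j\<in>{1..N}. (M j - M (j - 1)) * w j)"
    using incr w w_one by (intro sum_mono) simp
  finally show "M k - M 0 \<le> (\<Sum>j\<in>{1..N}. (M j - M (j - 1)) * w j)" .
  have "(\<Sum>j\<in>{1..N}. (M j - M (j - 1)) * w j)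
      \<le> (\<Sum>j\<in>{1..N}. if j \<le> k + 1 then M j - M (j - 1) else 0)"
    using incr w w_zero by (intro sum_mono) (simp add: mult_left_le)
  also have "\<dots> = M (min (k + 1) N) - M 0"
    by (rule sum_increments_truncated)
  finally show "(\<Sum>j\<in>{1..N}. (M j - M (j - 1)) * w j) \<le> M (min (k + 1) N) - M 0" .
qed

lemma cb_kernel_eq_row_sum:
  assumes i: "i \<in> {1..N}" and x: "x \<in> cb_I N i"
  shows "cb_kernel \<mu> N x y =
    (real N)\<^sup>2 * (\<Sum>j\<in>{1..N}. measure \<mu> (cb_Q N i j) * measure lborel ({0..y} \<inter> cb_I N j))"
proof -
  have "indicator (cb_I N i') x = (if i' = i then 1 else (0::real))" if "i' \<in> {1..N}" for i'
  proof (cases "i' = i")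
    case False
    then have "x \<notin> cb_I N i'"
      using cb_I_unique[of x N i i'] i x that by auto
    with False show ?thesis
      by simp
  qed (simp add: x)
  then have "(\<Sum>i'\<in>{1..N}. \<Sum>j\<in>{1..N}.
        measure \<mu> (cb_Q N i' j) * indicator (cb_I N i') x * measure lborel ({0..y} \<inter> cb_I N j))
      = (\<Sum>i'\<in>{1..N}. if i' = i then
          (\<Sum>j\<in>{1..N}. measure \<mu> (cb_Q N i j) * measure lborel ({0..y} \<inter> cb_I N j)) else 0)"
    by (intro sum.cong) simp_all
  then show ?thesis
    using i by (simp add: cb_kernel_def)
qed

lemma measure_Times_cb_I_eq_diff:
  assumes ds: "doubly_stochastic \<mu>" and E: "E \<in> sets borel" and j: "1 \<le> j"
  shows "measure \<mu> (E \<times> cb_I N j)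
    = measure \<mu> (E \<times> {0..real j / real N}) - measure \<mu> (E \<times> {0..real (j - 1) / real N})"
proof (cases "j = 1")
  case True
  then show ?thesis
    using doubly_stochastic_Times_singleton[OF ds, of E 0] by (simp add: cb_I_def)
next
  case False
  have sets: "E \<times> F \<in> sets \<mu>" if "F \<in> sets borel" for F
    using ds E that by (rule doubly_stochastic_Times_sets)
  have lower_nonneg: "0 \<le> (real j - 1) / real N"
    using j by simp
  have "E \<times> cb_I N j = E \<times> {0..real j / real N} - E \<times> {0..real (j - 1) / real N}"
    using False j by (auto simp: cb_I_def of_nat_diff) (use lower_nonneg in linarith)
  moreover have "real (j - 1) / real N \<le> real j / real N"
    by (simp add: divide_right_mono)
  then have "E \<times> {0..real (j - 1) / real N} \<subseteq> E \<times> {0..real j / real N}"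
    by auto
  ultimately show ?thesis
    using finite_measure.finite_measure_Diff[OF doubly_stochastic_finite_measure[OF ds] sets sets]
    by simp
qed

lemma markov_kernel_cb_row_average:
  assumes mk: "markov_kernel \<mu> K" and ds: "doubly_stochastic \<mu>"
    and i: "i \<in> {1..N}" and z: "z \<in> {0..1}"
    and close: "\<And>t. t \<in> cb_I N i \<Longrightarrow> \<bar>measure (K t) {0..z} - c\<bar> \<le> e"
  shows "\<bar>real N * measure \<mu> (cb_I N i \<times> {0..z}) - c\<bar> \<le> e"
proof -
  have N: "0 < real N"
    using i by simp
  have "cb_I N i \<subseteq> {0..1}" "{0..z} \<subseteq> {0..1}"
    using cb_I_subset[of i N] i z by auto
  moreover have "c - e \<le> measure (K t) {0..z} \<and> measure (K t) {0..z} \<le> c + e"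
    if "t \<in> cb_I N i" for t
    using close[OF that] by (simp add: abs_le_iff)
  ultimately have "measure lborel (cb_I N i) * (c - e) \<le> measure \<mu> (cb_I N i \<times> {0..z})"
    and "measure \<mu> (cb_I N i \<times> {0..z}) \<le> measure lborel (cb_I N i) * (c + e)"
    by (auto intro!: markov_kernel_measure_Times_bounds[OF mk ds])
  then show ?thesis
    using i N by (simp add: measure_cb_I field_simps abs_le_iff)
qed

lemma cb_kernel_between_grid_values:
  assumes ds: "doubly_stochastic \<mu>" and i: "i \<in> {1..N}" "x \<in> cb_I N i"
    and k: "real k \<le> real N * y" "real N * y < real k + 1" "k \<le> N"
  shows "real N * measure \<mu> (cb_I N i \<times> {0..real k / real N}) \<le> cb_kernel \<mu> N x y"
    and "cb_kernel \<mu> N x y \<le> real N * measure \<mu> (cb_I N i \<times> {0..real (min (k + 1) N) / real N})"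
proof -
  define M where "M l = measure \<mu> (cb_I N i \<times> {0..real l / real N})" for l
  define w where "w j = real N * measure lborel ({0..y} \<inter> cb_I N j)" for j
  have N: "0 < real N"
    using i by simp
  have "cb_kernel \<mu> N x y = real N * (\<Sum>j\<in>{1..N}. (M j - M (j - 1)) * w j)"
    unfolding cb_kernel_eq_row_sum[OF i] power2_eq_square M_def w_def cb_Q_def sum_distrib_left
    using measure_Times_cb_I_eq_diff[OF ds sets_cb_I] by (intro sum.cong) auto
  moreover have "mono M"
  proof (rule monoI)
    fix l l' :: nat
    assume "l \<le> l'"
    then have "real l / real N \<le> real l' / real N"
      by (simp add: divide_right_mono)
    then have "cb_I N i \<times> {0..real l / real N} \<subseteq> cb_I N i \<times> {0..real l' / real N}"
      by auto
    then show "M l \<le> M l'"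
      unfolding M_def
      by (intro finite_measure.finite_measure_mono[OF doubly_stochastic_finite_measure[OF ds]]
          doubly_stochastic_Times_sets[OF ds]) auto
  qed
  moreover have "M 0 = 0"
    using doubly_stochastic_Times_singleton[OF ds] by (simp add: M_def)
  moreover have "0 \<le> w j \<and> w j \<le> 1" if "1 \<le> j" for j
    using measure_Icc_Int_cb_I_le[OF that, of y N] N by (simp add: w_def field_simps)
  moreover have "w j = 1" if "1 \<le> j" "j \<le> k" for j
  proof -
    have "real j / real N \<le> y"
      using k that N by (simp add: field_simps)
    then show ?thesis
      using measure_Icc_Int_cb_I_full[OF that(1)] N by (simp add: w_def)
  qed
  moreover have "w j = 0" if "k + 2 \<le> j" for j
  proof -
    have "y < (real j - 1) / real N"
      using k that N by (simp add: field_simps)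
    then show ?thesis
      using measure_Icc_Int_cb_I_empty by (simp add: w_def)
  qed
  ultimately show "real N * M k \<le> cb_kernel \<mu> N x y"
    and "cb_kernel \<mu> N x y \<le> real N * M (min (k + 1) N)"
    using sum_weighted_increments_bounds[of M w k N] k(3) N by simp_all
qed

lemma cb_kernel_error_le_local_oscillation:
  assumes mk: "markov_kernel \<mu> K" and ds: "doubly_stochastic \<mu>"
    and N: "0 < N" and x: "x \<in> {0..1}" and y: "y \<in> {0..1}"
    and osc: "\<And>t z. t \<in> {0..1} \<Longrightarrow> z \<in> {0..1} \<Longrightarrow> \<bar>t - x\<bar> \<le> 1 / real N \<Longrightarrow>
      \<bar>z - y\<bar> \<le> 1 / real N \<Longrightarrow> \<bar>measure (K t) {0..z} - measure (K x) {0..y}\<bar> \<le> e"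
  shows "\<bar>cb_kernel \<mu> N x y - measure (K x) {0..y}\<bar> \<le> e"
proof -
  obtain i where i: "i \<in> {1..N}" "x \<in> cb_I N i"
    using cb_I_cover[OF x N] .
  define k where "k = nat \<lfloor>real N * y\<rfloor>"
  have "real k = of_int \<lfloor>real N * y\<rfloor>"
    using y unfolding k_def by simp
  then have k: "real k \<le> real N * y" "real N * y < real k + 1"
    by linarith+
  moreover have "real N * y \<le> real N"
    using y by (simp add: mult_left_le)
  ultimately have "k \<le> N"
    by linarith
  have grid: "\<bar>real N * measure \<mu> (cb_I N i \<times> {0..real l / real N}) - measure (K x) {0..y}\<bar> \<le> e"
    if "l \<le> N" "\<bar>real l - real N * y\<bar> \<le> 1" for l
  proof -
    have "\<bar>real l / real N - y\<bar> \<le> 1 / real N"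
      using that(2) N by (simp add: field_simps abs_le_iff)
    then show ?thesis
      using that(1) N
      by (intro markov_kernel_cb_row_average[OF mk ds i(1)] osc cb_I_dist_le[OF _ i(2)])
        (use cb_I_subset[of i N] i in auto)
  qed
  have "\<bar>real N * measure \<mu> (cb_I N i \<times> {0..real k / real N}) - measure (K x) {0..y}\<bar> \<le> e"
    using k \<open>k \<le> N\<close> by (intro grid) auto
  moreover have "\<bar>real N * measure \<mu> (cb_I N i \<times> {0..real (min (k + 1) N) / real N})
      - measure (K x) {0..y}\<bar> \<le> e"
    using k \<open>k \<le> N\<close> by (intro grid) (auto simp: min_def)
  ultimately show ?thesis
    using cb_kernel_between_grid_values[OF ds i k \<open>k \<le> N\<close>] by (simp add: abs_le_iff)
qed

lemma SUP_abs_tendsto_zeroI: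
  fixes f :: "nat \<Rightarrow> 'a \<Rightarrow> real"
  assumes "S \<noteq> {}"
    and uniform: "\<And>e. 0 < e \<Longrightarrow> eventually (\<lambda>N. \<forall>p\<in>S. \<bar>f N p\<bar> \<le> e) sequentially"
  shows "(\<lambda>N. SUP p\<in>S. \<bar>f N p\<bar>) \<longlonglongrightarrow> 0"
proof (rule tendstoI)
  fix e :: real
  assume "0 < e"
  then have "eventually (\<lambda>N. \<forall>p\<in>S. \<bar>f N p\<bar> \<le> e / 2) sequentially"
    by (intro uniform) simp
  then show "eventually (\<lambda>N. dist (SUP p\<in>S. \<bar>f N p\<bar>) 0 < e) sequentially"
  proof (rule eventually_mono)
    fix N
    assume bound: "\<forall>p\<in>S. \<bar>f N p\<bar> \<le> e / 2"
    obtain p where "p \<in> S"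
      using \<open>S \<noteq> {}\<close> by blast
    have "bdd_above ((\<lambda>p. \<bar>f N p\<bar>) ` S)"
      using bound by (intro bdd_aboveI2[where M="e / 2"]) auto
    then have "\<bar>f N p\<bar> \<le> (SUP p\<in>S. \<bar>f N p\<bar>)"
      using \<open>p \<in> S\<close> by (rule cSUP_upper2) simp
    moreover have "(SUP p\<in>S. \<bar>f N p\<bar>) \<le> e / 2"
      using \<open>S \<noteq> {}\<close> bound by (intro cSUP_least) auto
    ultimately show "dist (SUP p\<in>S. \<bar>f N p\<bar>) 0 < e"
      using \<open>0 < e\<close> by (simp add: dist_real_def)
  qed
qed

lemma continuous_on_unit_square_eventually_oscillation_le:
  fixes f :: "real \<times> real \<Rightarrow> real"
  assumes cont: "continuous_on ({0..1} \<times> {0..1}) f" and "0 < e"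
  shows "eventually (\<lambda>N. \<forall>x\<in>{0..1}. \<forall>y\<in>{0..1}. \<forall>t\<in>{0..1}. \<forall>z\<in>{0..1}.
    \<bar>t - x\<bar> \<le> 1 / real N \<longrightarrow> \<bar>z - y\<bar> \<le> 1 / real N \<longrightarrow> \<bar>f (t, z) - f (x, y)\<bar> \<le> e) sequentially"
proof -
  have "uniformly_continuous_on ({0..1} \<times> {0..1}) f"
    using cont by (intro compact_uniformly_continuous compact_Times) auto
  then obtain d where "0 < d" and d: "\<And>p q. p \<in> {0..1} \<times> {0..1} \<Longrightarrow> q \<in> {0..1} \<times> {0..1} \<Longrightarrow>
      dist q p < d \<Longrightarrow> dist (f q) (f p) < e"
    using \<open>0 < e\<close> unfolding uniformly_continuous_on_def by metis
  have "eventually (\<lambda>N. 2 / real N < d) sequentially"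
    using lim_const_over_n[of 2] \<open>0 < d\<close> by (rule order_tendstoD)
  then show ?thesis
  proof (rule eventually_mono, intro ballI impI)
    fix N :: nat and x y t z :: real
    assume "2 / real N < d" "x \<in> {0..1}" "y \<in> {0..1}" "t \<in> {0..1}" "z \<in> {0..1}"
      "\<bar>t - x\<bar> \<le> 1 / real N" "\<bar>z - y\<bar> \<le> 1 / real N"
    moreover have "dist (t, z) (x, y) \<le> \<bar>t - x\<bar> + \<bar>z - y\<bar>"
      using sqrt_sum_squares_le_sum_abs[of "t - x" "z - y"]
      by (simp add: dist_Pair_Pair dist_real_def)
    ultimately show "\<bar>f (t, z) - f (x, y)\<bar> \<le> e"
      using d[of "(x, y)" "(t, z)"] by (simp add: dist_real_def)
  qed
qed

theorem lemma3p2: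
  fixes A :: "real \<Rightarrow> real \<Rightarrow> real"
    and \<mu> :: "(real \<times> real) measure"
    and K :: "real \<Rightarrow> real measure"
  assumes "copula A"
    and "copula_measure A \<mu>"
    and "markov_kernel \<mu> K"
    and "continuous_on ({0..1} \<times> {0..1}) (\<lambda>(x, y). measure (K x) {0..y})"
  shows "(\<lambda>N. SUP p\<in>{0..1} \<times> {0..1}.
            \<bar>cb_kernel \<mu> N (fst p) (snd p) - measure (K (fst p)) {0..snd p}\<bar>)
         \<longlonglongrightarrow> 0"
proof (rule SUP_abs_tendsto_zeroI)
  fix e :: real
  assume "0 < e"
  \<comment> \<open>Only the doubly stochastic measure enters.\<close>
  have ds: "doubly_stochastic \<mu>"
    using assms(2) unfolding copula_measure_def by (rule conjunct1)
  show "eventually (\<lambda>N. \<forall>p\<in>{0..1} \<times> {0..1}.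
      \<bar>cb_kernel \<mu> N (fst p) (snd p) - measure (K (fst p)) {0..snd p}\<bar> \<le> e) sequentially"
    using continuous_on_unit_square_eventually_oscillation_le[OF assms(4) \<open>0 < e\<close>]
      eventually_gt_at_top[of 0]
    by eventually_elim (force intro!: cb_kernel_error_le_local_oscillation[OF assms(3) ds])
qed auto

end
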